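(* Let $n\ge1$. (i) Suppose $\mathcal{C}\subseteq\mathbb{F}_2^{n+1}$ is a union $\mathcal{C}=\bigcup_{i=0}^{\lfloor n/2\rfloor}\mathcal{C}_i$, where for each $i$, $\mathcal{C}_i$ is a covering design $\mathcal{C}(n+1,\,n+1-2i,\,n-2i)$ (a set of vectors of weight $n+1-2i$ such that every vector of weight $n-2i$ is covered by one of them). Then deleting any one fixed coordinate from all vectors of $\mathcal{C}$ yields a banded asymmetric covering $\mathcal{D}(n,1)$. (ii) Conversely, let $\mathcal{D}\subseteq\mathbb{F}_2^n$ be a banded asymmetric covering $\mathcal{D}(n,1)$. Append to each vector of $\mathcal{D}$ a final bit $0$ or $1$ chosen so that the resulting vector of length $n+1$ has even co-weight. Then, for each $0\le i\le\lfloor n/2\rfloor$, the resulting vectors of weight $n+1-2i$ form a covering design $\mathcal{C}(n+1,n+1-2i,n-2i)$.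
   Context: Subsets are identified with indicator vectors; weight is Hamming weight and the co-weight of $u\in\mathbb{F}_2^n$ is $n-\mathrm{wt}(u)$. A vector $u$ covers $v$ if the support of $v$ is contained in that of $u$. An asymmetric covering $\mathcal{D}(n,1)$ is a set $\mathcal{D}\subseteq\mathbb{F}_2^n$ such that every $v\in\mathbb{F}_2^n$ either lies in $\mathcal{D}$ or is covered by some $u\in\mathcal{D}$ with $\mathrm{wt}(u)=\mathrm{wt}(v)+1$. It is banded if every $v\in\mathbb{F}_2^n$ of odd co-weight is covered by some $u\in\mathcal{D}$ with $\mathrm{wt}(u)=\mathrm{wt}(v)+1$. A covering design $\mathcal{C}(v,k,t)$ is a collection of $k$-subsets of a $v$-set such that every $t$-subset is contained in at least one of them. *)

theory Defs
  imports Main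
begin

text \<open>Vectors of F_2^n are identified with their supports, i.e. subsets of {0..<n}.
  Weight = card, co-weight = n - card, u covers v iff v \<subseteq> u.\<close>

definition asym_covering :: "nat \<Rightarrow> nat set set \<Rightarrow> bool" where
  "asym_covering n D \<longleftrightarrow> D \<subseteq> Pow {0..<n} \<and>
     (\<forall>v. v \<subseteq> {0..<n} \<longrightarrow> v \<in> D \<or> (\<exists>u\<in>D. v \<subseteq> u \<and> card u = card v + 1))"

definition banded :: "nat \<Rightarrow> nat set set \<Rightarrow> bool" where
  "banded n D \<longleftrightarrow>
     (\<forall>v. v \<subseteq> {0..<n} \<longrightarrow> odd (n - card v) \<longrightarrow> (\<exists>u\<in>D. v \<subseteq> u \<and> card u = card v + 1))"

definition covering_design :: "nat \<Rightarrow> nat \<Rightarrow> nat \<Rightarrow> nat set set \<Rightarrow> bool" where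
  "covering_design v k t C \<longleftrightarrow> (\<forall>B\<in>C. B \<subseteq> {0..<v} \<and> card B = k) \<and>
     (\<forall>T. T \<subseteq> {0..<v} \<and> card T = t \<longrightarrow> (\<exists>B\<in>C. T \<subseteq> B))"

definition delete_coord :: "nat \<Rightarrow> nat set \<Rightarrow> nat set" where
  "delete_coord j u = (\<lambda>x. if x < j then x else x - 1) ` (u - {j})"

definition extend_even :: "nat \<Rightarrow> nat set \<Rightarrow> nat set" where
  "extend_even n u = (if even (n + 1 - card u) then u else insert n u)"

end

theory Submission
  imports Defs
begin

text \<open>A vector \<open>v\<close> of weight \<open>w\<close> in \<open>F_2^n\<close> has co-weight \<open>n - w\<close>. Re-inserting the
  deleted coordinate \<open>j\<close> with the bit that makes the co-weight even gives a vector of weight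
  \<open>n - 2i\<close>, \<open>i = (n - w) div 2\<close>, which the design \<open>C(n+1, n+1-2i, n-2i)\<close> covers. Deleting
  \<open>j\<close> from the covering block again: if the inserted bit was \<open>1\<close>, the image covers \<open>v\<close> one
  weight up (the banded condition for odd co-weight); if it was \<open>0\<close>, the image is \<open>v\<close> itself
  or covers it one weight up. Conversely, extending by the parity bit turns the covering
  vectors of a banded asymmetric covering into blocks one weight above the vectors they cover,
  with last bit \<open>1\<close> exactly when the covered vector has one there or lies in the covering itself.\<close>

definition insert_coord :: "nat \<Rightarrow> nat set \<Rightarrow> nat set" where
  "insert_coord j v = (\<lambda>x. if x < j then x else Suc x) ` v"

lemma insert_coord_subset: "v \<subseteq> {0..<n} \<Longrightarrow> insert_coord j v \<subseteq> {0..<n + 1}"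
  unfolding insert_coord_def by auto

lemma notin_insert_coord: "j \<notin> insert_coord j v"
  unfolding insert_coord_def by auto

lemma card_insert_coord: "card (insert_coord j v) = card v"
  unfolding insert_coord_def by (rule card_image) (auto simp: inj_on_def split: if_splits)

lemma card_insert_insert_coord:
  assumes "finite v" shows "card (insert j (insert_coord j v)) = card v + 1"
proof -
  have "finite (insert_coord j v)" unfolding insert_coord_def using assms by simp
  then show ?thesis by (simp add: notin_insert_coord card_insert_coord)
qed

lemma delete_coord_insert_coord: "delete_coord j (insert_coord j v) = v"
proof -
  have no_j: "insert_coord j v - {j} = insert_coord j v"
    using notin_insert_coord by blast
  have inverse: "(\<lambda>x::nat. if x < j then x else x - 1) \<circ> (\<lambda>x. if x < j then x else Suc x) = id"
    by (auto simp: fun_eq_iff)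
  show ?thesis
    unfolding delete_coord_def no_j unfolding insert_coord_def image_comp inverse by simp
qed

lemma delete_coord_insert: "delete_coord j (insert j u) = delete_coord j u"
  unfolding delete_coord_def by simp

lemma delete_coord_mono: "A \<subseteq> B \<Longrightarrow> delete_coord j A \<subseteq> delete_coord j B"
  unfolding delete_coord_def by auto

lemma card_delete_coord: "card (delete_coord j B) = card (B - {j})"
  unfolding delete_coord_def by (rule card_image) (auto simp: inj_on_def split: if_splits)

lemma delete_coord_subset: "B \<subseteq> {0..<n + 1} \<Longrightarrow> j < n + 1 \<Longrightarrow> delete_coord j B \<subseteq> {0..<n}"
  unfolding delete_coord_def by (auto split: if_splits)

lemma covering_design_blockD:
  "covering_design v k t C \<Longrightarrow> B \<in> C \<Longrightarrow> B \<subseteq> {0..<v} \<and> finite B \<and> card B = k"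
  unfolding covering_design_def by (meson finite_atLeastLessThan finite_subset)

lemma covering_designE:
  assumes "covering_design v k t C" "T \<subseteq> {0..<v}" "card T = t"
  obtains B where "B \<in> C" "T \<subseteq> B"
  using assms unfolding covering_design_def by blast

lemma covering_design_delete_coord_same_weight:
  assumes C: "covering_design (n + 1) (t + 1) t C" and j: "j < n + 1"
    and v: "v \<subseteq> {0..<n}" "card v = t"
  shows "\<exists>B\<in>C. delete_coord j B = v \<or> (v \<subseteq> delete_coord j B \<and> card (delete_coord j B) = t + 1)"
proof -
  have "card (insert_coord j v) = t" using card_insert_coord v(2) by simp
  then obtain B where B: "B \<in> C" "insert_coord j v \<subseteq> B"
    using covering_designE[OF C insert_coord_subset[OF v(1)]] by blast
  have fin: "finite B" and card_B: "card B = t + 1"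
    using covering_design_blockD[OF C B(1)] by auto
  show ?thesis
  proof (cases "j \<in> B")
    case True
    have sub: "insert j (insert_coord j v) \<subseteq> B" using True B(2) by blast
    have "finite v" using v(1) finite_subset by blast
    then have "card (insert j (insert_coord j v)) = card B"
      using card_insert_insert_coord v(2) card_B by simp
    then have "insert j (insert_coord j v) = B" using card_subset_eq[OF fin sub] by blast
    then have "delete_coord j B = v"
      using delete_coord_insert delete_coord_insert_coord by metis
    then show ?thesis using B(1) by blast
  next
    case False
    have "v \<subseteq> delete_coord j B"
      using delete_coord_mono[OF B(2)] delete_coord_insert_coord by metis
    moreover have "card (delete_coord j B) = t + 1"
      using False card_B by (simp add: card_delete_coord)
    ultimately show ?thesis using B(1) by blast
  qed
qed

lemma covering_design_delete_coord_next_weight: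
  assumes C: "covering_design (n + 1) (t + 1) t C" and j: "j < n + 1"
    and v: "v \<subseteq> {0..<n}" "card v + 1 = t"
  shows "\<exists>B\<in>C. v \<subseteq> delete_coord j B \<and> card (delete_coord j B) = card v + 1"
proof -
  have "finite v" using v(1) finite_subset by blast
  then have "card (insert j (insert_coord j v)) = t" using card_insert_insert_coord v(2) by simp
  moreover have "insert j (insert_coord j v) \<subseteq> {0..<n + 1}" using insert_coord_subset[OF v(1)] j by simp
  ultimately obtain B where B: "B \<in> C" "insert j (insert_coord j v) \<subseteq> B"
    using covering_designE[OF C] by blast
  have "v \<subseteq> delete_coord j B"
    using delete_coord_mono[OF B(2)] delete_coord_insert delete_coord_insert_coord by metis
  moreover have "card (delete_coord j B) = card v + 1"
    using covering_design_blockD[OF C B(1)] B(2) v(2) by (simp add: card_delete_coord)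
  ultimately show ?thesis using B(1) by blast
qed

lemma co_weight_band:
  fixes w n :: nat
  assumes "w \<le> n"
  shows "(n - w) div 2 \<le> n div 2"
    and "n - 2 * ((n - w) div 2) = (if even (n - w) then w else w + 1)"
proof -
  show "(n - w) div 2 \<le> n div 2" by (simp add: div_le_mono)
  show "n - 2 * ((n - w) div 2) = (if even (n - w) then w else w + 1)"
    using assms by presburger
qed

lemma delete_coord_covering_designs:
  assumes cov: "\<forall>i \<le> n div 2. covering_design (n + 1) (n + 1 - 2 * i) (n - 2 * i) (Cs i)"
    and j: "j < n + 1"
  defines "D \<equiv> delete_coord j ` (\<Union>i \<in> {..n div 2}. Cs i)"
  shows "asym_covering n D \<and> banded n D"
proof -
  have cov_band: "covering_design (n + 1) (n - 2 * i + 1) (n - 2 * i) (Cs i)" if "i \<le> n div 2" for i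
  proof -
    have "n + 1 - 2 * i = n - 2 * i + 1" using that by simp
    then show ?thesis using cov[rule_format, OF that] by simp
  qed
  have "D \<subseteq> Pow {0..<n}"
  proof
    fix u assume "u \<in> D"
    then obtain i B where "i \<le> n div 2" "B \<in> Cs i" "u = delete_coord j B"
      unfolding D_def by blast
    then show "u \<in> Pow {0..<n}"
      using covering_design_blockD[OF cov_band] delete_coord_subset[OF _ j] by blast
  qed
  moreover have "v \<in> D \<or> (\<exists>u\<in>D. v \<subseteq> u \<and> card u = card v + 1)"
    and "odd (n - card v) \<Longrightarrow> \<exists>u\<in>D. v \<subseteq> u \<and> card u = card v + 1"
    if v: "v \<subseteq> {0..<n}" for v
  proof -
    define i where "i = (n - card v) div 2"
    have "card v \<le> n" using card_mono[OF finite_atLeastLessThan v] by simp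
    then have i: "i \<le> n div 2" and band: "n - 2 * i = (if even (n - card v) then card v else card v + 1)"
      using co_weight_band unfolding i_def by blast+
    have C: "covering_design (n + 1) (n - 2 * i + 1) (n - 2 * i) (Cs i)" using cov_band[OF i] .
    have image_D: "delete_coord j B \<in> D" if "B \<in> Cs i" for B
      using i that unfolding D_def by blast
    show odd_case: "\<exists>u\<in>D. v \<subseteq> u \<and> card u = card v + 1" if "odd (n - card v)"
    proof -
      have "card v + 1 = n - 2 * i" using band that by simp
      then obtain B where "B \<in> Cs i" "v \<subseteq> delete_coord j B" "card (delete_coord j B) = card v + 1"
        using covering_design_delete_coord_next_weight[OF C j v] by blast
      then show ?thesis using image_D by blast
    qed
    show "v \<in> D \<or> (\<exists>u\<in>D. v \<subseteq> u \<and> card u = card v + 1)"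
    proof (cases "even (n - card v)")
      case True
      then have "card v = n - 2 * i" using band by simp
      then obtain B where "B \<in> Cs i"
        "delete_coord j B = v \<or> (v \<subseteq> delete_coord j B \<and> card (delete_coord j B) = card v + 1)"
        using covering_design_delete_coord_same_weight[OF C j v] by auto
      then show ?thesis using image_D by metis
    next
      case False
      then show ?thesis using odd_case by blast
    qed
  qed
  ultimately show ?thesis unfolding asym_covering_def banded_def by blast
qed

lemma extend_even_subset: "u \<subseteq> {0..<n} \<Longrightarrow> extend_even n u \<subseteq> {0..<n + 1}"
  unfolding extend_even_def by auto

lemma extend_even_covering_design:
  assumes D: "asym_covering n D" "banded n D" and t: "t \<le> n" "even (n - t)"
  shows "covering_design (n + 1) (t + 1) t {w \<in> extend_even n ` D. card w = t + 1}"
    (is "covering_design _ _ _ ?C")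
proof -
  have D_sub: "u \<subseteq> {0..<n}" if "u \<in> D" for u
    using D(1) that unfolding asym_covering_def by blast
  have in_blocks: "extend_even n u \<in> ?C" if "u \<in> D" "card (extend_even n u) = t + 1" for u
    using that by blast
  have covered: "\<exists>B\<in>?C. T \<subseteq> B" if T: "T \<subseteq> {0..<n + 1}" "card T = t" for T
  proof (cases "n \<in> T")
    case False
    then have "T \<subseteq> {0..<n}" using T(1) by (auto simp: less_Suc_eq subset_iff)
    then consider "T \<in> D" | u where "u \<in> D" "T \<subseteq> u" "card u = t + 1"
      using D(1) T(2) unfolding asym_covering_def by blast
    then show ?thesis
    proof cases
      case 1
      have "finite T" using T(1) finite_subset by blast
      then have "extend_even n T = insert n T" "card (insert n T) = t + 1"
        using False T(2) t unfolding extend_even_def by auto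
      then have "insert n T \<in> ?C" using in_blocks[OF 1] by simp
      then show ?thesis by blast
    next
      case 2
      then have "extend_even n u = u" using t unfolding extend_even_def by auto
      then have "u \<in> ?C" using in_blocks[OF 2(1)] 2(3) by simp
      then show ?thesis using 2(2) by blast
    qed
  next
    case True
    have fin: "finite T" using T(1) finite_subset by blast
    then have "card (T - {n}) + 1 = t" using card_Suc_Diff1[OF fin True] T(2) by simp
    then have "odd (n - card (T - {n}))" using t by presburger
    moreover have "T - {n} \<subseteq> {0..<n}" using T(1) by auto
    ultimately have "\<exists>u\<in>D. T - {n} \<subseteq> u \<and> card u = card (T - {n}) + 1"
      using D(2) unfolding banded_def by blast
    then obtain u where u: "u \<in> D" "T - {n} \<subseteq> u" "card u = t"
      using \<open>card (T - {n}) + 1 = t\<close> by auto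
    have "n \<notin> u" "finite u" using D_sub[OF u(1)] finite_subset by auto
    then have "extend_even n u = insert n u" "card (insert n u) = t + 1"
      using u(3) t unfolding extend_even_def by auto
    then have "insert n u \<in> ?C" using in_blocks[OF u(1)] by simp
    moreover have "T \<subseteq> insert n u" using u(2) by blast
    ultimately show ?thesis by blast
  qed
  have "B \<subseteq> {0..<n + 1} \<and> card B = t + 1" if "B \<in> ?C" for B
    using that extend_even_subset D_sub by blast
  with covered show ?thesis unfolding covering_design_def by blast
qed

theorem theorem3:
  fixes n :: nat
  assumes "n \<ge> 1"
  shows "(\<forall>(Cs :: nat \<Rightarrow> nat set set) j.
            (\<forall>i \<le> n div 2. covering_design (n + 1) (n + 1 - 2 * i) (n - 2 * i) (Cs i)) \<and> j < n + 1
            \<longrightarrow> (let D = delete_coord j ` (\<Union>i \<in> {..n div 2}. Cs i)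
                 in asym_covering n D \<and> banded n D))
       \<and> (\<forall>D. asym_covering n D \<and> banded n D \<longrightarrow>
            (\<forall>i \<le> n div 2. covering_design (n + 1) (n + 1 - 2 * i) (n - 2 * i)
                 {w \<in> extend_even n ` D. card w = n + 1 - 2 * i}))"
proof (intro conjI allI impI)
  fix Cs :: "nat \<Rightarrow> nat set set" and j
  assume "(\<forall>i \<le> n div 2. covering_design (n + 1) (n + 1 - 2 * i) (n - 2 * i) (Cs i)) \<and> j < n + 1"
  then show "let D = delete_coord j ` (\<Union>i \<in> {..n div 2}. Cs i) in asym_covering n D \<and> banded n D"
    unfolding Let_def using delete_coord_covering_designs by blast
next
  fix D i
  assume D: "asym_covering n D \<and> banded n D" and "i \<le> n div 2"
  then have "n - 2 * i \<le> n" "even (n - (n - 2 * i))" "n + 1 - 2 * i = n - 2 * i + 1"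
    by auto
  then show "covering_design (n + 1) (n + 1 - 2 * i) (n - 2 * i)
               {w \<in> extend_even n ` D. card w = n + 1 - 2 * i}"
    using extend_even_covering_design[of n D "n - 2 * i"] D by simp
qed

end
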